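(* Work in the cube $[-1,1]^d\subset\mathbb{R}^d$ with the dual cells and shifted dual cells defined in the context. Let $z'=(z'_1,\dots,z'_d)$ have exactly $p$ entries equal to $\bullet$, and $z''$ exactly $q$ entries equal to $\bullet$. Let $I=\{i:z'_i=\bullet\}$ and $J=\{j:z''_j=\bullet\}$. Then: 1. If $I\cap J\neq\emptyset$, then $P^\vee_{z'}\cap\tilde P^\vee_{z''}(\epsilon)=\emptyset$ for every $\epsilon>0$. 2. If $I\cap J=\emptyset$ and for some $k$ one has $\{z'_k,z''_k\}=\{+,-\}$, then $\lim_{\epsilon\to0^+}P^\vee_{z'}\cap\tilde P^\vee_{z''}(\epsilon)$ has dimension lower than $d-p-q$. 3. If for some $k$ either ($z'_k=\bullet$ and $z''_k=+$) or ($z'_k=-$ and $z''_k=\bullet$), then $P^\vee_{z'}\cap\tilde P^\vee_{z''}(\epsilon)=\emptyset$ for every $\epsilon>0$. 4. Suppose $z'_k=z''_k$ whenever both lie in $\{+,-\}$. Suppose further that $z''_k=-$ for every $k$ with $z'_k=\bullet$, and $z'_k=+$ for every $k$ with $z''_k=\bullet$. Then $\lim_{\epsilon\to0^+}P^\vee_{z'}\cap\tilde P^\vee_{z''}(\epsilon)=P^\vee_z$, a $(d-p-q)$-dimensional dual cell. Here $z_k=z'_k=z''_k$ when $z'_k=z''_k\in\{+,-\}$, and $z_k=\bullet$ when $z'_k=\bullet$ or $z''_k=\bullet$.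
   Context: For $z\in\{+,-,\bullet\}^d$ with exactly $p$ entries $\bullet$, the dual cell is $$P^\vee_z=\{x\in\mathbb{R}^d: x_i=0 \text{ if } z_i=\bullet,\ x_i\in[0,1]\text{ if }z_i=+,\ x_i\in[-1,0]\text{ if }z_i=-\}.$$ It has dimension $d-p$ and is dual to the $p$-face of $[-1,1]^d$ in which the coordinates with $z_i=\bullet$ vary over $[-1,1]$ and $x_i=z_i$ (read as $\pm1$) otherwise. For $\epsilon>0$ the shifted dual cell is $$\tilde P^\vee_z(\epsilon)=[-1,1]^d\cap\Big\{\epsilon(1,1,\dots,1)+\sum_{i:z_i\neq\bullet}z_it_i\mathbf e_i:\ t_i\ge0\Big\},$$ where $z_i\in\{+,-\}$ is read as $\pm1$ and $\mathbf e_i$ are the standard unit vectors. Limits of sets as $\epsilon\to0^+$ are Hausdorff (Cauchy) limits. *)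

theory Defs
  imports "HOL-Analysis.Analysis"
begin

text \<open>Sign vectors z in {+,-,bullet}^d, with d = CARD('n).\<close>
datatype sgn3 = Pl | Mi | Bu

fun sval :: "sgn3 \<Rightarrow> real" where
  "sval Pl = 1" | "sval Mi = -1" | "sval Bu = 0"

definition dual_cell :: "('n::finite \<Rightarrow> sgn3) \<Rightarrow> (real^'n) set" where
  "dual_cell z = {x. \<forall>i. (z i = Bu \<longrightarrow> x$i = 0)
                      \<and> (z i = Pl \<longrightarrow> 0 \<le> x$i \<and> x$i \<le> 1)
                      \<and> (z i = Mi \<longrightarrow> -1 \<le> x$i \<and> x$i \<le> 0)}"

definition shifted_dual_cell :: "('n::finite \<Rightarrow> sgn3) \<Rightarrow> real \<Rightarrow> (real^'n) set" where
  "shifted_dual_cell z eps = cbox (- One) One \<inter>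
     {eps *\<^sub>R One + (\<Sum>i\<in>{i. z i \<noteq> Bu}. (sval (z i) * t i) *\<^sub>R axis i 1) | t.
        \<forall>i. t i \<ge> 0}"

text \<open>Hausdorff (Cauchy) convergence of a family of sets S t to a set L along a filter F:
  for every e > 0, eventually each set lies in the open e-neighbourhood of the other.
  (With this definition the empty set is an isolated point, as in the Hausdorff metric.)\<close>
definition set_tendsto :: "('b \<Rightarrow> 'a::metric_space set) \<Rightarrow> 'a set \<Rightarrow> 'b filter \<Rightarrow> bool" where
  "set_tendsto S L F \<longleftrightarrow> (\<forall>e>0. eventually (\<lambda>t. S t \<subseteq> (\<Union>y\<in>L. ball y e) \<and> L \<subseteq> (\<Union>y\<in>S t. ball y e)) F)"

end

theory Submission
  imports Defs
begin

text \<open>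
  Coordinatewise, the dual cell of \<open>z\<close> is \<open>[-1,1] \<inter> R(z\<^sub>i, 0)\<close> and the shifted dual cell is
  \<open>[-1,1] \<inter> R(z\<^sub>i, \<epsilon>)\<close>, where \<open>R(+,c) = [c,\<infinity>)\<close>, \<open>R(-,c) = (-\<infinity>,c]\<close> and \<open>R(\<bullet>,c) = {c}\<close>;
  in particular the dual cell is the shifted dual cell at \<open>\<epsilon> = 0\<close>. So the intersection of the
  dual cell of \<open>z'\<close> with the shifted dual cell of \<open>z''\<close> is a box. For \<open>\<epsilon> > 0\<close> it is empty as soon
  as some coordinate has \<open>z'\<^sub>k \<in> {\<bullet>,-}\<close> and \<open>z''\<^sub>k \<in> {\<bullet>,+}\<close>. Otherwise its corners depend
  continuously on \<open>\<epsilon>\<close>, and clamping points onto a nearby box shows that it converges in the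
  Hausdorff sense to the box at \<open>\<epsilon> = 0\<close>, the intersection of the two dual cells. That is the dual
  cell of the sign vector which keeps the coordinates where \<open>z'\<close> and \<open>z''\<close> agree and is \<open>\<bullet>\<close>
  elsewhere, so its dimension is \<open>d - p - q\<close> minus the number of coordinates with opposite signs.
\<close>

fun sign_ray :: "sgn3 \<Rightarrow> real \<Rightarrow> real set" where
  "sign_ray Bu e = {e}" | "sign_ray Pl e = {e..}" | "sign_ray Mi e = {..e}"

lemma sign_ray_iff: "x \<in> sign_ray s e \<longleftrightarrow> (\<exists>t\<ge>0. x = e + sval s * t)"
  by (cases s) (auto intro: exI[of _ "x - e"] exI[of _ "e - x"])

lemma One_cart_nth: "(One :: real^'n::finite) $ i = 1"
  using inner_axis[of "One :: real^'n" i 1] by simp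

lemma mem_cube_cart: "x \<in> cbox (- One) (One :: real^'n::finite) \<longleftrightarrow> (\<forall>i. x $ i \<in> {-1..1})"
  unfolding mem_box_cart vector_uminus_component One_cart_nth by simp

lemma cone_point_nth:
  fixes z :: "'n::finite \<Rightarrow> sgn3"
  shows "(e *\<^sub>R One + (\<Sum>i\<in>{i. z i \<noteq> Bu}. (sval (z i) * t i) *\<^sub>R axis i 1)) $ j
         = e + sval (z j) * t j"
  unfolding vector_add_component vector_scaleR_component One_cart_nth
  by (cases "z j") (auto simp: axis_def if_distrib cong: if_cong)

lemma shifted_dual_cell_eq:
  "shifted_dual_cell z e = {x. \<forall>i. x $ i \<in> {-1..1} \<inter> sign_ray (z i) e}"
proof -
  have cone: "(\<exists>t. x = e *\<^sub>R One + (\<Sum>i\<in>{i. z i \<noteq> Bu}. (sval (z i) * t i) *\<^sub>R axis i 1)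
                    \<and> (\<forall>i. t i \<ge> 0))
        \<longleftrightarrow> (\<forall>i. x $ i \<in> sign_ray (z i) e)" (is "?cone \<longleftrightarrow> _") for x
  proof -
    have "?cone \<longleftrightarrow> (\<exists>t. \<forall>i. t i \<ge> 0 \<and> x $ i = e + sval (z i) * t i)"
      by (simp only: vec_eq_iff cone_point_nth) blast
    also have "\<dots> \<longleftrightarrow> (\<forall>i. \<exists>t\<ge>0. x $ i = e + sval (z i) * t)"
      by (rule choice_iff[symmetric])
    finally show ?thesis
      by (simp only: sign_ray_iff)
  qed
  show ?thesis
    unfolding shifted_dual_cell_def using mem_cube_cart cone by blast
qed

lemma dual_cell_eq: "dual_cell z = {x. \<forall>i. x $ i \<in> {-1..1} \<inter> sign_ray (z i) 0}"
proof -
  have "(z i = Bu \<longrightarrow> v = 0) \<and> (z i = Pl \<longrightarrow> 0 \<le> v \<and> v \<le> 1) \<and> (z i = Mi \<longrightarrow> -1 \<le> v \<and> v \<le> 0)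
        \<longleftrightarrow> v \<in> {-1..1} \<inter> sign_ray (z i) 0" for i and v :: real
    by (cases "z i") auto
  then show ?thesis
    unfolding dual_cell_def by presburger
qed

lemma dual_cell_eq_shifted_dual_cell: "dual_cell z = shifted_dual_cell z 0"
  by (simp only: dual_cell_eq shifted_dual_cell_eq)

definition cell_lo :: "sgn3 \<Rightarrow> real \<Rightarrow> real" where
  "cell_lo s e = (if s = Mi then -1 else e)"

definition cell_hi :: "sgn3 \<Rightarrow> real \<Rightarrow> real" where
  "cell_hi s e = (if s = Pl then 1 else e)"

lemma tendsto_cell_lo: "(f \<longlongrightarrow> l) F \<Longrightarrow> ((\<lambda>x. cell_lo s (f x)) \<longlongrightarrow> cell_lo s l) F"
  by (cases "s = Mi") (simp_all add: cell_lo_def)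

lemma tendsto_cell_hi: "(f \<longlongrightarrow> l) F \<Longrightarrow> ((\<lambda>x. cell_hi s (f x)) \<longlongrightarrow> cell_hi s l) F"
  by (cases "s = Pl") (simp_all add: cell_hi_def)

lemma cube_Int_sign_ray: "\<bar>e\<bar> \<le> 1 \<Longrightarrow> {-1..1} \<inter> sign_ray s e = {cell_lo s e..cell_hi s e}"
  by (cases s) (auto simp: cell_lo_def cell_hi_def)

lemma shifted_dual_cell_eq_cbox:
  "\<bar>e\<bar> \<le> 1 \<Longrightarrow>
   shifted_dual_cell z e = cbox (\<chi> i. cell_lo (z i) e) (\<chi> i. cell_hi (z i) e)"
  by (simp add: shifted_dual_cell_eq cube_Int_sign_ray interval_cart)

lemma closed_dual_cell: "closed (dual_cell z)"
  by (simp add: dual_cell_eq_shifted_dual_cell shifted_dual_cell_eq_cbox closed_cbox)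

definition sign_compatible :: "sgn3 \<Rightarrow> sgn3 \<Rightarrow> bool" where
  "sign_compatible a b \<longleftrightarrow> a = Pl \<or> b = Mi"

lemma sign_ray_Int_eq_empty:
  "0 < e \<Longrightarrow> \<not> sign_compatible a b \<Longrightarrow> sign_ray a 0 \<inter> sign_ray b e = {}"
  by (cases a; cases b) (auto simp: sign_compatible_def)

lemma dual_cell_Int_shifted_dual_cell_eq_empty:
  assumes "\<exists>k. \<not> sign_compatible (z' k) (z'' k)"
  shows "\<forall>e>0. dual_cell z' \<inter> shifted_dual_cell z'' e = {}"
  using assms sign_ray_Int_eq_empty
  unfolding dual_cell_eq_shifted_dual_cell shifted_dual_cell_eq by blast

lemma cell_interval_nonempty:
  "sign_compatible a b \<Longrightarrow> 0 \<le> e \<Longrightarrow> e \<le> 1 \<Longrightarrow>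
   max (cell_lo a 0) (cell_lo b e) \<le> min (cell_hi a 0) (cell_hi b e)"
  by (cases a; cases b) (auto simp: sign_compatible_def cell_lo_def cell_hi_def)

definition sign_meet :: "sgn3 \<Rightarrow> sgn3 \<Rightarrow> sgn3" where
  "sign_meet a b = (if a = b then a else Bu)"

lemma sign_ray_Int_sign_ray_zero: "sign_ray a 0 \<inter> sign_ray b 0 = sign_ray (sign_meet a b) 0"
  by (cases a; cases b) (auto simp: sign_meet_def)

lemma dual_cell_Int_dual_cell:
  "dual_cell z' \<inter> dual_cell z'' = dual_cell (\<lambda>i. sign_meet (z' i) (z'' i))"
  unfolding dual_cell_eq using sign_ray_Int_sign_ray_zero by blast

lemma aff_dim_le_card_support:
  fixes S :: "(real^'n::finite) set"
  assumes "S \<subseteq> {x. \<forall>i. i \<notin> F \<longrightarrow> x $ i = 0}"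
  shows "aff_dim S \<le> int (card F)"
proof -
  have "subspace {x::real^'n. \<forall>i. i \<notin> F \<longrightarrow> x $ i = 0}"
    unfolding subspace_def by auto
  then have "aff_dim {x::real^'n. \<forall>i. i \<notin> F \<longrightarrow> x $ i = 0} = int (card F)"
    using dim_substandard_cart[where 'a=real and d=F] by (simp add: aff_dim_subspace dim_vec_eq)
  then show ?thesis
    using aff_dim_subset[OF assms] by simp
qed

lemma card_le_aff_dim_axis:
  fixes S :: "(real^'n::finite) set"
  assumes "0 \<in> S" "\<And>i. i \<in> F \<Longrightarrow> axis i (c i) \<in> S \<and> c i \<noteq> 0"
  shows "int (card F) \<le> aff_dim S"
proof -
  define B where "B = (\<lambda>i. axis i (c i)) ` F"
  have "inj_on (\<lambda>i. axis i (c i)) F"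
    by (rule inj_onI) (use assms(2) in \<open>auto simp: axis_eq_axis\<close>)
  then have "card B = card F"
    unfolding B_def by (rule card_image)
  moreover have "independent B"
  proof (rule pairwise_orthogonal_independent)
    show "pairwise orthogonal B"
      unfolding B_def pairwise_def orthogonal_def by (auto simp: inner_axis_axis)
    show "0 \<notin> B"
      unfolding B_def using assms(2) by auto
  qed
  moreover have "B \<subseteq> S"
    unfolding B_def using assms(2) by auto
  ultimately have "card F \<le> dim S"
    using independent_card_le_dim by metis
  moreover have "aff_dim S = int (dim S)"
    using aff_dim_eq_dim[OF hull_inc[OF assms(1)]] by simp
  ultimately show ?thesis by simp
qed

lemma aff_dim_dual_cell: "aff_dim (dual_cell z) = int (card {i. z i \<noteq> Bu})"
proof (rule antisym)
  show "aff_dim (dual_cell z) \<le> int (card {i. z i \<noteq> Bu})"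
    by (rule aff_dim_le_card_support) (auto simp: dual_cell_def)
  show "int (card {i. z i \<noteq> Bu}) \<le> aff_dim (dual_cell z)"
  proof (rule card_le_aff_dim_axis[where c = "\<lambda>i. sval (z i)"])
    show "0 \<in> dual_cell z"
      by (auto simp: dual_cell_def)
    show "axis i (sval (z i)) \<in> dual_cell z \<and> sval (z i) \<noteq> 0" if "i \<in> {i. z i \<noteq> Bu}" for i
      using that by (cases "z i") (auto simp: dual_cell_def axis_def)
  qed
qed

lemma set_tendsto_cong:
  assumes "\<forall>\<^sub>F t in F. S t = S' t" "set_tendsto S L F"
  shows "set_tendsto S' L F"
  unfolding set_tendsto_def
proof (intro allI impI)
  fix e :: real
  assume "e > 0"
  with assms(2) have "\<forall>\<^sub>F t in F. S t \<subseteq> (\<Union>y\<in>L. ball y e) \<and> L \<subseteq> (\<Union>y\<in>S t. ball y e)"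
    unfolding set_tendsto_def by blast
  with assms(1) show "\<forall>\<^sub>F t in F. S' t \<subseteq> (\<Union>y\<in>L. ball y e) \<and> L \<subseteq> (\<Union>y\<in>S' t. ball y e)"
    by eventually_elim simp
qed

lemma set_tendsto_empty: "\<forall>\<^sub>F t in F. S t = {} \<Longrightarrow> set_tendsto S {} F"
  unfolding set_tendsto_def by (auto elim: eventually_mono)

lemma clamp_inner:
  fixes a b x :: "'a::euclidean_space"
  assumes "cbox a b \<noteq> {}" "i \<in> Basis"
  shows "clamp a b x \<bullet> i = (if x \<bullet> i < a \<bullet> i then a \<bullet> i else if x \<bullet> i \<le> b \<bullet> i then x \<bullet> i else b \<bullet> i)"
  using assms by (simp add: clamp_def box_ne_empty)

lemma dist_clamp_le:
  fixes x :: "'a::euclidean_space"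
  assumes "x \<in> cbox a b" "cbox a' b' \<noteq> {}"
  shows "dist x (clamp a' b' x) \<le> dist a a' + dist b b'"
proof -
  have "dist (x \<bullet> i) (clamp a' b' x \<bullet> i) \<le> dist (a \<bullet> i) (a' \<bullet> i) + dist (b \<bullet> i) (b' \<bullet> i)"
    if "i \<in> Basis" for i
    using assms that by (auto simp: clamp_inner mem_box dist_real_def)
  then have "dist x (clamp a' b' x)
      \<le> L2_set (\<lambda>i. dist (a \<bullet> i) (a' \<bullet> i) + dist (b \<bullet> i) (b' \<bullet> i)) Basis"
    unfolding euclidean_dist_l2[of x] by (rule L2_set_mono) auto
  also have "\<dots> \<le> dist a a' + dist b b'"
    unfolding euclidean_dist_l2[of a] euclidean_dist_l2[of b] by (rule L2_set_triangle_ineq)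
  finally show ?thesis .
qed

lemma set_tendsto_cbox:
  fixes a b :: "'b \<Rightarrow> 'a::euclidean_space"
  assumes "(a \<longlongrightarrow> a0) F" "(b \<longlongrightarrow> b0) F"
    and "\<forall>\<^sub>F t in F. cbox (a t) (b t) \<noteq> {}" "cbox a0 b0 \<noteq> {}"
  shows "set_tendsto (\<lambda>t. cbox (a t) (b t)) (cbox a0 b0) F"
  unfolding set_tendsto_def
proof (intro allI impI)
  fix e :: real
  assume "e > 0"
  then have "e / 2 > 0"
    by simp
  then have "\<forall>\<^sub>F t in F. dist (a t) a0 < e / 2" "\<forall>\<^sub>F t in F. dist (b t) b0 < e / 2"
    by (rule tendstoD[OF assms(1)], rule tendstoD[OF assms(2)])
  with assms(3) show "\<forall>\<^sub>F t in F. cbox (a t) (b t) \<subseteq> (\<Union>y\<in>cbox a0 b0. ball y e)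
                              \<and> cbox a0 b0 \<subseteq> (\<Union>y\<in>cbox (a t) (b t). ball y e)"
  proof eventually_elim
    case (elim t)
    show ?case
    proof (intro conjI subsetI)
      fix x
      assume "x \<in> cbox (a t) (b t)"
      then have "dist x (clamp a0 b0 x) < e"
        using dist_clamp_le[OF _ assms(4)] elim(2,3) by fastforce
      moreover have "clamp a0 b0 x \<in> cbox a0 b0"
        using assms(4) by (simp add: box_ne_empty)
      ultimately show "x \<in> (\<Union>y\<in>cbox a0 b0. ball y e)"
        by (auto simp: dist_commute)
    next
      fix x
      assume "x \<in> cbox a0 b0"
      then have "dist x (clamp (a t) (b t) x) < e"
        using dist_clamp_le[OF _ elim(1)] elim(2,3) by (fastforce simp: dist_commute)
      moreover have "clamp (a t) (b t) x \<in> cbox (a t) (b t)"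
        using elim(1) by (simp add: box_ne_empty)
      ultimately show "x \<in> (\<Union>y\<in>cbox (a t) (b t). ball y e)"
        by (auto simp: dist_commute)
    qed
  qed
qed

lemma set_tendsto_dual_cell_Int_shifted_dual_cell:
  assumes "\<forall>k. sign_compatible (z' k) (z'' k)"
  shows "set_tendsto (\<lambda>e. dual_cell z' \<inter> shifted_dual_cell z'' e)
           (dual_cell z' \<inter> dual_cell z'') (at_right 0)"
proof -
  define lo where "lo e = (\<chi> i. max (cell_lo (z' i) 0) (cell_lo (z'' i) e))" for e
  define hi where "hi e = (\<chi> i. min (cell_hi (z' i) 0) (cell_hi (z'' i) e))" for e
  have box: "dual_cell z' \<inter> shifted_dual_cell z'' e = cbox (lo e) (hi e)" if "\<bar>e\<bar> \<le> 1" for e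
    using that by (simp add: dual_cell_eq_shifted_dual_cell shifted_dual_cell_eq_cbox
        Int_interval_cart interval_cbox_cart lo_def hi_def)
  have nonempty: "cbox (lo e) (hi e) \<noteq> {}" if "0 \<le> e" "e \<le> 1" for e
    unfolding interval_ne_empty_cart lo_def hi_def vec_lambda_beta
    using assms that cell_interval_nonempty by blast
  have "(lo \<longlongrightarrow> lo 0) (at_right 0)"
    unfolding lo_def by (intro tendsto_vec_lambda tendsto_max tendsto_const tendsto_cell_lo tendsto_ident_at)
  moreover have "(hi \<longlongrightarrow> hi 0) (at_right 0)"
    unfolding hi_def by (intro tendsto_vec_lambda tendsto_min tendsto_const tendsto_cell_hi tendsto_ident_at)
  moreover have "\<forall>\<^sub>F e in at_right 0. cbox (lo e) (hi e) \<noteq> {}"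
    using eventually_at_right_real[OF zero_less_one] by eventually_elim (simp add: nonempty)
  moreover have "cbox (lo 0) (hi 0) \<noteq> {}"
    by (simp add: nonempty)
  ultimately have "set_tendsto (\<lambda>e. cbox (lo e) (hi e)) (cbox (lo 0) (hi 0)) (at_right 0)"
    by (rule set_tendsto_cbox)
  moreover have "\<forall>\<^sub>F e in at_right 0. cbox (lo e) (hi e) = dual_cell z' \<inter> shifted_dual_cell z'' e"
    using eventually_at_right_real[OF zero_less_one] by eventually_elim (simp add: box)
  ultimately have "set_tendsto (\<lambda>e. dual_cell z' \<inter> shifted_dual_cell z'' e) (cbox (lo 0) (hi 0)) (at_right 0)"
    by (rule set_tendsto_cong[rotated])
  then show ?thesis
    using box[of 0] by (simp add: dual_cell_eq_shifted_dual_cell)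
qed

lemma card_Compl_Un_disjoint:
  fixes A B :: "'a::finite set"
  assumes "A \<inter> B = {}"
  shows "int (card (- (A \<union> B))) = int CARD('a) - int (card A) - int (card B)"
proof -
  have "card (- (A \<union> B)) + card (A \<union> B) = card (- (A \<union> B) \<union> (A \<union> B))"
    by (rule card_Un_disjoint[symmetric]) auto
  also have "\<dots> = CARD('a)"
    by (simp only: Compl_partition2)
  finally have "card (- (A \<union> B)) + card (A \<union> B) = CARD('a)" .
  moreover have "card (A \<union> B) = card A + card B"
    using assms by (simp add: card_Un_disjoint)
  ultimately show ?thesis by linarith
qed

lemma card_nonbullet_both:
  fixes z' z'' :: "'n::finite \<Rightarrow> sgn3"
  assumes "\<not> (\<exists>k. z' k = Bu \<and> z'' k = Bu)"
  shows "int (card {i. z' i \<noteq> Bu \<and> z'' i \<noteq> Bu})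
       = int CARD('n) - int (card {i. z' i = Bu}) - int (card {i. z'' i = Bu})"
proof -
  have "{i. z' i \<noteq> Bu \<and> z'' i \<noteq> Bu} = - ({i. z' i = Bu} \<union> {i. z'' i = Bu})"
    by auto
  then show ?thesis
    using assms card_Compl_Un_disjoint[of "{i. z' i = Bu}" "{i. z'' i = Bu}"] by auto
qed

lemma low_dim_limit_dual_cell_Int_shifted_dual_cell:
  assumes "\<exists>k. (z' k = Pl \<and> z'' k = Mi) \<or> (z' k = Mi \<and> z'' k = Pl)"
  shows "\<exists>L. closed L \<and> set_tendsto (\<lambda>e. dual_cell z' \<inter> shifted_dual_cell z'' e) L (at_right 0)
             \<and> aff_dim L < int (card {i. z' i \<noteq> Bu \<and> z'' i \<noteq> Bu})"
proof (cases "\<forall>i. sign_compatible (z' i) (z'' i)")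
  case True
  have "{i. sign_meet (z' i) (z'' i) \<noteq> Bu} \<subseteq> {i. z' i \<noteq> Bu \<and> z'' i \<noteq> Bu}"
    by (auto simp: sign_meet_def)
  moreover obtain k where "(z' k = Pl \<and> z'' k = Mi) \<or> (z' k = Mi \<and> z'' k = Pl)"
    using assms by blast
  then have "k \<in> {i. z' i \<noteq> Bu \<and> z'' i \<noteq> Bu} - {i. sign_meet (z' i) (z'' i) \<noteq> Bu}"
    by (auto simp: sign_meet_def)
  ultimately have "{i. sign_meet (z' i) (z'' i) \<noteq> Bu} \<subset> {i. z' i \<noteq> Bu \<and> z'' i \<noteq> Bu}"
    by blast
  then have "aff_dim (dual_cell z' \<inter> dual_cell z'') < int (card {i. z' i \<noteq> Bu \<and> z'' i \<noteq> Bu})"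
    by (simp add: dual_cell_Int_dual_cell aff_dim_dual_cell psubset_card_mono)
  then show ?thesis
    using True closed_dual_cell set_tendsto_dual_cell_Int_shifted_dual_cell by blast
next
  case False
  then have empty: "\<forall>e>0. dual_cell z' \<inter> shifted_dual_cell z'' e = {}"
    by (intro dual_cell_Int_shifted_dual_cell_eq_empty) blast
  have "\<forall>\<^sub>F e in at_right 0. dual_cell z' \<inter> shifted_dual_cell z'' e = {}"
    using eventually_at_right_less[of 0] by eventually_elim (simp add: empty)
  then have "set_tendsto (\<lambda>e. dual_cell z' \<inter> shifted_dual_cell z'' e) {} (at_right 0)"
    by (rule set_tendsto_empty)
  then show ?thesis
    by (intro exI[of _ "{}"]) simp
qed

lemma limit_dual_cell_Int_shifted_dual_cell_eq_dual_cell: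
  assumes "\<forall>k. z' k \<noteq> Bu \<and> z'' k \<noteq> Bu \<longrightarrow> z' k = z'' k"
    and "\<forall>k. z' k = Bu \<longrightarrow> z'' k = Mi" "\<forall>k. z'' k = Bu \<longrightarrow> z' k = Pl"
  defines "z \<equiv> \<lambda>k. if z' k = Bu \<or> z'' k = Bu then Bu else z' k"
  shows "set_tendsto (\<lambda>e. dual_cell z' \<inter> shifted_dual_cell z'' e) (dual_cell z) (at_right 0)"
    and "aff_dim (dual_cell z) = int (card {i. z' i \<noteq> Bu \<and> z'' i \<noteq> Bu})"
proof -
  have compatible: "\<forall>k. sign_compatible (z' k) (z'' k)"
  proof
    fix k
    show "sign_compatible (z' k) (z'' k)"
      using assms(1-3)[rule_format, of k] by (cases "z' k"; cases "z'' k") (simp_all add: sign_compatible_def)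
  qed
  have meet: "z = (\<lambda>k. sign_meet (z' k) (z'' k))"
    using assms(1) by (auto simp: z_def sign_meet_def)
  show "set_tendsto (\<lambda>e. dual_cell z' \<inter> shifted_dual_cell z'' e) (dual_cell z) (at_right 0)"
    unfolding meet dual_cell_Int_dual_cell[symmetric]
    by (rule set_tendsto_dual_cell_Int_shifted_dual_cell[OF compatible])
  have "{k. sign_meet (z' k) (z'' k) \<noteq> Bu} = {i. z' i \<noteq> Bu \<and> z'' i \<noteq> Bu}"
    using assms(1) by (auto simp: sign_meet_def)
  then show "aff_dim (dual_cell z) = int (card {i. z' i \<noteq> Bu \<and> z'' i \<noteq> Bu})"
    by (simp add: meet aff_dim_dual_cell)
qed

theorem proposition6:
  fixes z' z'' :: "'n::finite \<Rightarrow> sgn3" and p q :: nat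
  assumes hp: "p = card {i. z' i = Bu}"
      and hq: "q = card {i. z'' i = Bu}"
  shows
    "((\<exists>k. z' k = Bu \<and> z'' k = Bu) \<longrightarrow>
        (\<forall>eps>0. dual_cell z' \<inter> shifted_dual_cell z'' eps = {}))
   \<and> ((\<not>(\<exists>k. z' k = Bu \<and> z'' k = Bu)) \<and>
       (\<exists>k. (z' k = Pl \<and> z'' k = Mi) \<or> (z' k = Mi \<and> z'' k = Pl)) \<longrightarrow>
        (\<exists>L. closed L \<and>
             set_tendsto (\<lambda>eps. dual_cell z' \<inter> shifted_dual_cell z'' eps) L (at_right 0) \<and>
             aff_dim L < int CARD('n) - int p - int q))
   \<and> ((\<exists>k. (z' k = Bu \<and> z'' k = Pl) \<or> (z' k = Mi \<and> z'' k = Bu)) \<longrightarrow>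
        (\<forall>eps>0. dual_cell z' \<inter> shifted_dual_cell z'' eps = {}))
   \<and> ((\<forall>k. z' k \<noteq> Bu \<and> z'' k \<noteq> Bu \<longrightarrow> z' k = z'' k) \<and>
       (\<forall>k. z' k = Bu \<longrightarrow> z'' k = Mi) \<and>
       (\<forall>k. z'' k = Bu \<longrightarrow> z' k = Pl) \<longrightarrow>
        (let z = (\<lambda>k. if z' k = Bu \<or> z'' k = Bu then Bu else z' k) in
          set_tendsto (\<lambda>eps. dual_cell z' \<inter> shifted_dual_cell z'' eps) (dual_cell z) (at_right 0)
          \<and> aff_dim (dual_cell z) = int CARD('n) - int p - int q))"
proof (intro conjI impI)
  show "\<forall>eps>0. dual_cell z' \<inter> shifted_dual_cell z'' eps = {}"
    if "\<exists>k. z' k = Bu \<and> z'' k = Bu"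
    by (rule dual_cell_Int_shifted_dual_cell_eq_empty) (use that sgn3.distinct in \<open>metis sign_compatible_def\<close>)
  show "\<forall>eps>0. dual_cell z' \<inter> shifted_dual_cell z'' eps = {}"
    if "\<exists>k. (z' k = Bu \<and> z'' k = Pl) \<or> (z' k = Mi \<and> z'' k = Bu)"
    by (rule dual_cell_Int_shifted_dual_cell_eq_empty) (use that sgn3.distinct in \<open>metis sign_compatible_def\<close>)
next
  assume "\<not> (\<exists>k. z' k = Bu \<and> z'' k = Bu) \<and>
    (\<exists>k. (z' k = Pl \<and> z'' k = Mi) \<or> (z' k = Mi \<and> z'' k = Pl))"
  then show "\<exists>L. closed L \<and>
      set_tendsto (\<lambda>eps. dual_cell z' \<inter> shifted_dual_cell z'' eps) L (at_right 0) \<and>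
      aff_dim L < int CARD('n) - int p - int q"
    using low_dim_limit_dual_cell_Int_shifted_dual_cell[of z' z''] card_nonbullet_both[of z' z'']
    unfolding hp hq by simp
next
  assume "(\<forall>k. z' k \<noteq> Bu \<and> z'' k \<noteq> Bu \<longrightarrow> z' k = z'' k) \<and>
    (\<forall>k. z' k = Bu \<longrightarrow> z'' k = Mi) \<and> (\<forall>k. z'' k = Bu \<longrightarrow> z' k = Pl)"
  moreover from this have "\<not> (\<exists>k. z' k = Bu \<and> z'' k = Bu)"
    by auto
  ultimately show "let z = (\<lambda>k. if z' k = Bu \<or> z'' k = Bu then Bu else z' k) in
      set_tendsto (\<lambda>eps. dual_cell z' \<inter> shifted_dual_cell z'' eps) (dual_cell z) (at_right 0)
      \<and> aff_dim (dual_cell z) = int CARD('n) - int p - int q"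
    using limit_dual_cell_Int_shifted_dual_cell_eq_dual_cell[of z' z''] card_nonbullet_both[of z' z'']
    unfolding Let_def hp hq by simp
qed

end
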